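(* Let $G$ be an infinite, connected, locally finite graph. If $S$ is a finite set of vertices of $G$ and $U$ is an infinite set of vertices of $G$, then $S$ does not doubly resolve $U$.
   Context: $d$ denotes shortest-path distance in $G$. Two vertices $x,y$ doubly resolve a pair of vertices $u,v$ if $d(u,x)-d(v,x)\neq d(u,y)-d(v,y)$. For sets $S,U$ of vertices, $S$ doubly resolves $U$ if every pair of distinct vertices of $U$ is doubly resolved by some two vertices of $S$. *)

theory Defs
  imports Main
begin

definition simple_graph :: "'a set \<Rightarrow> ('a \<Rightarrow> 'a \<Rightarrow> bool) \<Rightarrow> bool" where
  "simple_graph V E \<longleftrightarrow> (\<forall>x y. E x y \<longrightarrow> x \<in> V \<and> y \<in> V \<and> E y x \<and> x \<noteq> y)"

definition walk :: "('a \<Rightarrow> 'a \<Rightarrow> bool) \<Rightarrow> 'a list \<Rightarrow> bool" where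
  "walk E xs \<longleftrightarrow> xs \<noteq> [] \<and> (\<forall>i. Suc i < length xs \<longrightarrow> E (xs ! i) (xs ! Suc i))"

definition walk_between :: "('a \<Rightarrow> 'a \<Rightarrow> bool) \<Rightarrow> 'a \<Rightarrow> 'a \<Rightarrow> 'a list \<Rightarrow> bool" where
  "walk_between E u v xs \<longleftrightarrow> walk E xs \<and> hd xs = u \<and> last xs = v"

definition connected_graph :: "'a set \<Rightarrow> ('a \<Rightarrow> 'a \<Rightarrow> bool) \<Rightarrow> bool" where
  "connected_graph V E \<longleftrightarrow> (\<forall>u\<in>V. \<forall>v\<in>V. \<exists>xs. walk_between E u v xs)"

definition locally_finite :: "'a set \<Rightarrow> ('a \<Rightarrow> 'a \<Rightarrow> bool) \<Rightarrow> bool" where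
  "locally_finite V E \<longleftrightarrow> (\<forall>v\<in>V. finite {u. E v u})"

definition gdist :: "('a \<Rightarrow> 'a \<Rightarrow> bool) \<Rightarrow> 'a \<Rightarrow> 'a \<Rightarrow> nat" where
  "gdist E u v = (LEAST n. \<exists>xs. walk_between E u v xs \<and> length xs = Suc n)"

definition doubly_resolves_pair ::
  "('a \<Rightarrow> 'a \<Rightarrow> bool) \<Rightarrow> 'a \<Rightarrow> 'a \<Rightarrow> 'a \<Rightarrow> 'a \<Rightarrow> bool" where
  "doubly_resolves_pair E x y u v \<longleftrightarrow>
     int (gdist E u x) - int (gdist E v x) \<noteq> int (gdist E u y) - int (gdist E v y)"

definition doubly_resolves :: "('a \<Rightarrow> 'a \<Rightarrow> bool) \<Rightarrow> 'a set \<Rightarrow> 'a set \<Rightarrow> bool" where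
  "doubly_resolves E S U \<longleftrightarrow>
     (\<forall>u\<in>U. \<forall>v\<in>U. u \<noteq> v \<longrightarrow> (\<exists>x\<in>S. \<exists>y\<in>S. doubly_resolves_pair E x y u v))"

end

theory Submission
  imports Defs "HOL-Library.FuncSet"
begin

(* Fix an anchor vertex a.  A pair x, y doubly resolves u, v exactly when the "distance
   profiles" x |-> d(u,x) - d(u,a) of u and v differ at x or at y (the anchor terms cancel).
   By the triangle inequality every profile entry at x lies in the fixed interval
   [-d(x,a), d(a,x)], so over the finite set S there are only finitely many profiles.
   By pigeonhole two distinct vertices of the infinite set U share a profile, and no pair
   of vertices of S doubly resolves them. *)

lemma walk_Cons_Cons: "walk E (x # y # xs) \<longleftrightarrow> E x y \<and> walk E (y # xs)"
  unfolding walk_def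
proof safe
  fix i assume "\<forall>i. Suc i < length (x # y # xs) \<longrightarrow> E ((x # y # xs) ! i) ((x # y # xs) ! Suc i)"
    and "Suc i < length (y # xs)"
  then show "E ((y # xs) ! i) ((y # xs) ! Suc i)" by (metis Suc_less_eq length_Cons nth_Cons_Suc)
next
  assume "\<forall>i. Suc i < length (x # y # xs) \<longrightarrow> E ((x # y # xs) ! i) ((x # y # xs) ! Suc i)"
  then show "E x y" by force
next
  fix i assume "E x y" "\<forall>i. Suc i < length (y # xs) \<longrightarrow> E ((y # xs) ! i) ((y # xs) ! Suc i)"
    "Suc i < length (x # y # xs)"
  then show "E ((x # y # xs) ! i) ((x # y # xs) ! Suc i)" by (cases i) auto
qed

lemma walk_append:
  assumes "walk E p" "walk E q" "last p = hd q"
  shows "walk E (p @ tl q)"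
  using assms
proof (induction p rule: induct_list012)
  case 1 then show ?case by (simp add: walk_def)
next
  case (2 x) then show ?case by (cases q) auto
next
  case (3 x y zs) then show ?case by (simp add: walk_Cons_Cons)
qed

lemma walk_between_append:
  assumes p: "walk_between E a b p" and q: "walk_between E b c q"
  shows "walk_between E a c (p @ tl q)"
proof -
  have "p \<noteq> []" "q \<noteq> []" using p q unfolding walk_between_def walk_def by auto
  have "last (p @ tl q) = c"
  proof (cases "tl q = []")
    case True
    then have "q = [b]" using \<open>q \<noteq> []\<close> q unfolding walk_between_def by (cases q) auto
    then show ?thesis using True p q unfolding walk_between_def by simp
  next
    case False
    then show ?thesis using q \<open>q \<noteq> []\<close> unfolding walk_between_def by (simp add: last_tl)
  qed
  moreover have "walk E (p @ tl q)"
    using p q unfolding walk_between_def by (intro walk_append) auto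
  ultimately show ?thesis using p \<open>p \<noteq> []\<close> unfolding walk_between_def by simp
qed

lemma gdist_shortest_walk:
  assumes "walk_between E a b xs"
  shows "\<exists>ys. walk_between E a b ys \<and> length ys = Suc (gdist E a b)"
proof -
  have "xs \<noteq> []" using assms unfolding walk_between_def walk_def by auto
  then have "\<exists>n ys. walk_between E a b ys \<and> length ys = Suc n"
    using assms by (metis Suc_pred length_greater_0_conv)
  then show ?thesis unfolding gdist_def by (rule LeastI_ex)
qed

lemma gdist_triangle:
  assumes "walk_between E a b p" "walk_between E b c q"
  shows "gdist E a c \<le> gdist E a b + gdist E b c"
proof -
  obtain p' where p': "walk_between E a b p'" "length p' = Suc (gdist E a b)"
    using gdist_shortest_walk[OF assms(1)] by blast
  obtain q' where q': "walk_between E b c q'" "length q' = Suc (gdist E b c)"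
    using gdist_shortest_walk[OF assms(2)] by blast
  have "walk_between E a c (p' @ tl q')" using walk_between_append[OF p'(1) q'(1)] .
  moreover have "length (p' @ tl q') = Suc (gdist E a b + gdist E b c)" using p' q' by simp
  ultimately show ?thesis unfolding gdist_def by (intro Least_le) blast
qed

definition distance_profile :: "('a \<Rightarrow> 'a \<Rightarrow> bool) \<Rightarrow> 'a set \<Rightarrow> 'a \<Rightarrow> 'a \<Rightarrow> 'a \<Rightarrow> int" where
  "distance_profile E S a u = (\<lambda>x\<in>S. int (gdist E u x) - int (gdist E u a))"

lemma distance_difference_bounds:
  assumes "connected_graph V E" "u \<in> V" "x \<in> V" "a \<in> V"
  shows "int (gdist E u x) - int (gdist E u a) \<in> {- int (gdist E x a) .. int (gdist E a x)}"
proof -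
  have walk: "\<And>b c. b \<in> V \<Longrightarrow> c \<in> V \<Longrightarrow> \<exists>xs. walk_between E b c xs"
    using assms(1) unfolding connected_graph_def by blast
  obtain p_ua p_ax p_ux p_xa where "walk_between E u a p_ua" "walk_between E a x p_ax"
    "walk_between E u x p_ux" "walk_between E x a p_xa"
    using walk assms(2-4) by meson
  then have "gdist E u x \<le> gdist E u a + gdist E a x"
    and "gdist E u a \<le> gdist E u x + gdist E x a"
    by (meson gdist_triangle)+
  then show ?thesis by simp
qed

lemma finite_distance_profiles:
  assumes "connected_graph V E" "S \<subseteq> V" "finite S" "a \<in> V"
  shows "finite (distance_profile E S a ` V)"
proof (rule finite_subset)
  show "distance_profile E S a ` V \<subseteq> PiE S (\<lambda>x. {- int (gdist E x a) .. int (gdist E a x)})"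
  proof (rule image_subsetI)
    fix u assume "u \<in> V"
    have "int (gdist E u x) - int (gdist E u a) \<in> {- int (gdist E x a) .. int (gdist E a x)}"
      if "x \<in> S" for x
      using that assms(2) by (intro distance_difference_bounds[OF assms(1) \<open>u \<in> V\<close> _ assms(4)]) blast
    then show "distance_profile E S a u \<in> PiE S (\<lambda>x. {- int (gdist E x a) .. int (gdist E a x)})"
      unfolding distance_profile_def by (simp add: restrict_PiE_iff)
  qed
  show "finite (PiE S (\<lambda>x. {- int (gdist E x a) .. int (gdist E a x)}))"
    using assms(3) by (intro finite_PiE) auto
qed

lemma equal_profiles_not_doubly_resolved:
  assumes "distance_profile E S a u = distance_profile E S a v" "x \<in> S" "y \<in> S"
  shows "\<not> doubly_resolves_pair E x y u v"
proof -
  have "distance_profile E S a u x = distance_profile E S a v x"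
    and "distance_profile E S a u y = distance_profile E S a v y"
    using assms(1) by simp_all
  then show ?thesis
    using assms(2,3) unfolding distance_profile_def doubly_resolves_pair_def by simp
qed

theorem lemma5:
  fixes V :: "'a set" and E :: "'a \<Rightarrow> 'a \<Rightarrow> bool" and S U :: "'a set"
  assumes "simple_graph V E"
    and "infinite V"
    and "connected_graph V E"
    and "locally_finite V E"
    and "S \<subseteq> V" and "finite S"
    and "U \<subseteq> V" and "infinite U"
  shows "\<not> doubly_resolves E S U"
proof -
  have "U \<noteq> {}" using \<open>infinite U\<close> by (rule infinite_imp_nonempty)
  then obtain a where "a \<in> U" by blast
  let ?profile = "distance_profile E S a"
  have "finite (?profile ` V)"
    using finite_distance_profiles[OF \<open>connected_graph V E\<close> \<open>S \<subseteq> V\<close> \<open>finite S\<close>]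
      \<open>a \<in> U\<close> \<open>U \<subseteq> V\<close> by (simp add: subset_iff)
  then have "finite (?profile ` U)" using \<open>U \<subseteq> V\<close> by (rule finite_subset[OF image_mono, rotated])
  then have "\<not> inj_on ?profile U" using \<open>infinite U\<close> by (metis finite_imageD)
  then obtain u v where "u \<in> U" "v \<in> U" "u \<noteq> v" and same: "?profile u = ?profile v"
    unfolding inj_on_def by blast
  have "\<not> doubly_resolves_pair E x y u v" if "x \<in> S" "y \<in> S" for x y
    using equal_profiles_not_doubly_resolved[OF same that] .
  then show ?thesis
    using \<open>u \<in> U\<close> \<open>v \<in> U\<close> \<open>u \<noteq> v\<close> unfolding doubly_resolves_def by blast
qed

end
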